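(* Let $a<b$ and let $f:[a,b]\rightarrow\mathbb{R}$ be an absolutely continuous mapping with $f'\in L^2[a,b]$. Define \[ \sigma(f')=\|f'\|_2^2-\frac{(f(b)-f(a))^2}{b-a}. \] Then for all $x\in[a,\frac{a+b}{2}]$, \[ \left|\frac{f(x)+f(a+b-x)}{2}-\frac{1}{b-a}\int_{a}^{b}f(t)\,dt\right| \leq (b-a)^{-1/2} \left[\frac{(b-a)^2}{48}+\left(x-\frac{3a+b}{4}\right)^2\right]^{1/2}\sqrt{\sigma(f')}. \] This inequality is sharp in the sense that the constant $\frac{1}{48}$ on the right-hand side cannot be replaced by a smaller one.
   Context: $\|g\|_2=\left(\int_a^b g(t)^2\,dt\right)^{1/2}$. *)

theory Defs
  imports "HOL-Analysis.Analysis"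
begin

definition abs_continuous_on :: "real \<Rightarrow> real \<Rightarrow> (real \<Rightarrow> real) \<Rightarrow> bool" where
  "abs_continuous_on a b f \<longleftrightarrow>
     (\<forall>e>0. \<exists>d>0. \<forall>(n::nat) (x::nat \<Rightarrow> real) (y::nat \<Rightarrow> real).
        (\<forall>k<n. a \<le> x k \<and> x k \<le> y k \<and> y k \<le> b) \<and>
        (\<forall>i<n. \<forall>j<n. i \<noteq> j \<longrightarrow> y i \<le> x j \<or> y j \<le> x i) \<and>
        (\<Sum>k<n. y k - x k) < d
        \<longrightarrow> (\<Sum>k<n. \<bar>f (y k) - f (x k)\<bar>) < e)"

definition AC_L2_setting :: "real \<Rightarrow> real \<Rightarrow> (real \<Rightarrow> real) \<Rightarrow> (real \<Rightarrow> real) \<Rightarrow> bool" where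
  "AC_L2_setting a b f f' \<longleftrightarrow>
     a < b \<and> abs_continuous_on a b f \<and>
     (AE t in lebesgue_on {a..b}. (f has_real_derivative f' t) (at t within {a..b})) \<and>
     f' \<in> borel_measurable (lebesgue_on {a..b}) \<and>
     integrable (lebesgue_on {a..b}) (\<lambda>t. (f' t)\<^sup>2)"

definition sigma :: "real \<Rightarrow> real \<Rightarrow> (real \<Rightarrow> real) \<Rightarrow> (real \<Rightarrow> real) \<Rightarrow> real" where
  "sigma a b f f' = (LINT t|lebesgue_on {a..b}. (f' t)\<^sup>2) - (f b - f a)\<^sup>2 / (b - a)"

definition trap_bound :: "real \<Rightarrow> real \<Rightarrow> real \<Rightarrow> (real \<Rightarrow> real) \<Rightarrow> (real \<Rightarrow> real) \<Rightarrow> real \<Rightarrow> real" where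
  "trap_bound C a b f f' x =
     (b - a) powr (-1/2) * sqrt (C * (b - a)\<^sup>2 + (x - (3*a + b)/4)\<^sup>2) * sqrt (sigma a b f f')"

definition trap_lhs :: "real \<Rightarrow> real \<Rightarrow> (real \<Rightarrow> real) \<Rightarrow> real \<Rightarrow> real" where
  "trap_lhs a b f x =
     \<bar>(f x + f (a + b - x)) / 2 - (1 / (b - a)) * (LINT t|lebesgue_on {a..b}. f t)\<bar>"

end

theory Submission
  imports Defs
begin

text \<open>
  Let \<open>K\<close> be the Peano kernel equal to \<open>t - a\<close> on \<open>[a, x]\<close>, to \<open>t - (a + b) / 2\<close> on
  \<open>[x, a + b - x]\<close> and to \<open>t - b\<close> on \<open>[a + b - x, b]\<close>. Integration by parts on the three
  pieces gives \<open>\<integral>K f' = (b - a) / 2 * (f x + f (a + b - x)) - \<integral>f\<close>, while \<open>\<integral>K = 0\<close> and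
  \<open>\<integral>K\<^sup>2 = (b - a) * ((b - a)\<^sup>2 / 48 + (x - (3 * a + b) / 4)\<^sup>2)\<close>. As \<open>K\<close> has mean zero,
  \<open>\<integral>K f' = \<integral>K (f' - c)\<close> with \<open>c = (f b - f a) / (b - a)\<close>, and Cauchy-Schwarz together with
  \<open>\<integral>(f' - c)\<^sup>2 = \<sigma>(f')\<close> yields the inequality. Integration by parts is justified because an
  absolutely continuous function is the Henstock-Kurzweil integral of its a.e. derivative.

  For \<open>x = a\<close> the kernel is \<open>t - (a + b) / 2\<close>, which is \<open>f' - c\<close> for the parabola
  \<open>f t = (t - (a + b) / 2)\<^sup>2 / 2\<close>; Cauchy-Schwarz is then an equality, so \<open>1/48\<close> is optimal.
\<close>

hide_const (open) Polynomial.content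

definition nonoverlapping_intervals ::
    "real \<Rightarrow> real \<Rightarrow> nat \<Rightarrow> (nat \<Rightarrow> real) \<Rightarrow> (nat \<Rightarrow> real) \<Rightarrow> bool" where
  "nonoverlapping_intervals a b n x y \<longleftrightarrow>
     (\<forall>k<n. a \<le> x k \<and> x k \<le> y k \<and> y k \<le> b) \<and>
     (\<forall>i<n. \<forall>j<n. i \<noteq> j \<longrightarrow> y i \<le> x j \<or> y j \<le> x i)"

lemma abs_continuous_on_iff:
  "abs_continuous_on a b f \<longleftrightarrow>
     (\<forall>e>0. \<exists>d>0. \<forall>n x y. nonoverlapping_intervals a b n x y \<and> (\<Sum>k<n. y k - x k) < d
        \<longrightarrow> (\<Sum>k<n. \<bar>f (y k) - f (x k)\<bar>) < e)"
  unfolding abs_continuous_on_def nonoverlapping_intervals_def by simp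

lemma abs_continuous_onE:
  assumes "abs_continuous_on a b f" "e > 0"
  obtains d where "d > 0"
    "\<And>n x y. nonoverlapping_intervals a b n x y \<Longrightarrow> (\<Sum>k<n. y k - x k) < d \<Longrightarrow>
       (\<Sum>k<n. \<bar>f (y k) - f (x k)\<bar>) < e"
proof -
  from assms obtain d where "d > 0" and "\<forall>n x y. nonoverlapping_intervals a b n x y \<and>
      (\<Sum>k<n. y k - x k) < d \<longrightarrow> (\<Sum>k<n. \<bar>f (y k) - f (x k)\<bar>) < e"
    unfolding abs_continuous_on_iff by auto
  then show ?thesis using that by simp
qed

lemma abs_continuous_on_imp_continuous_on:
  assumes "abs_continuous_on a b f"
  shows "continuous_on {a..b} f"
  unfolding continuous_on_iff
proof (intro ballI allI impI)
  fix x e :: real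
  assume x: "x \<in> {a..b}" and e: "0 < e"
  obtain d where d: "d > 0" and small: "\<And>n x y. nonoverlapping_intervals a b n x y \<Longrightarrow>
      (\<Sum>k<n. y k - x k) < d \<Longrightarrow> (\<Sum>k<n. \<bar>f (y k) - f (x k)\<bar>) < e"
    by (fact abs_continuous_onE[OF assms e])
  show "\<exists>d>0. \<forall>x'\<in>{a..b}. dist x' x < d \<longrightarrow> dist (f x') (f x) < e"
  proof (intro exI[of _ d] conjI ballI impI d)
    fix y assume y: "y \<in> {a..b}" and "dist y x < d"
    then have "(\<Sum>k<(1::nat). max x y - min x y) < d"
      by (auto simp: dist_real_def)
    moreover have "nonoverlapping_intervals a b 1 (\<lambda>_. min x y) (\<lambda>_. max x y)"
      using x y by (auto simp: nonoverlapping_intervals_def)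
    ultimately have "(\<Sum>k<(1::nat). \<bar>f (max x y) - f (min x y)\<bar>) < e"
      using small[of 1 "\<lambda>_. min x y" "\<lambda>_. max x y"] by simp
    then show "dist (f y) (f x) < e"
      by (cases "x \<le> y") (auto simp: dist_real_def max_def min_def abs_minus_commute)
  qed
qed

lemma abs_continuous_on_const: "abs_continuous_on a b (\<lambda>_. c)"
  unfolding abs_continuous_on_def by (auto intro!: exI[of _ 1])

lemma abs_continuous_on_subinterval:
  assumes ac: "abs_continuous_on a b f" and "a \<le> p" "q \<le> b"
  shows "abs_continuous_on p q f"
  unfolding abs_continuous_on_iff
proof (intro allI impI)
  fix e :: real assume e: "e > 0"
  obtain d where "d > 0" and small: "\<And>n x y. nonoverlapping_intervals a b n x y \<Longrightarrow>
      (\<Sum>k<n. y k - x k) < d \<Longrightarrow> (\<Sum>k<n. \<bar>f (y k) - f (x k)\<bar>) < e"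
    by (fact abs_continuous_onE[OF ac e])
  moreover have "nonoverlapping_intervals a b n x y" if "nonoverlapping_intervals p q n x y" for n x y
    using that \<open>a \<le> p\<close> \<open>q \<le> b\<close> unfolding nonoverlapping_intervals_def by force
  ultimately show "\<exists>d>0. \<forall>n x y. nonoverlapping_intervals p q n x y \<and> (\<Sum>k<n. y k - x k) < d \<longrightarrow>
      (\<Sum>k<n. \<bar>f (y k) - f (x k)\<bar>) < e"
    by auto
qed

lemma abs_continuous_on_dominated:
  assumes ac: "abs_continuous_on a b f" and "M \<ge> 0" "L \<ge> 0"
    and dom: "\<And>x y. a \<le> x \<Longrightarrow> x \<le> y \<Longrightarrow> y \<le> b \<Longrightarrow>
       \<bar>g y - g x\<bar> \<le> M * \<bar>f y - f x\<bar> + L * (y - x)"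
  shows "abs_continuous_on a b g"
  unfolding abs_continuous_on_iff
proof (intro allI impI)
  fix e :: real assume e: "e > 0"
  obtain d1 where d1: "d1 > 0" and small: "\<And>n x y. nonoverlapping_intervals a b n x y \<Longrightarrow>
      (\<Sum>k<n. y k - x k) < d1 \<Longrightarrow> (\<Sum>k<n. \<bar>f (y k) - f (x k)\<bar>) < e / (2 * (M + 1))"
    using abs_continuous_onE[OF ac, of "e / (2 * (M + 1))"] e \<open>M \<ge> 0\<close> by auto
  define d where "d = min d1 (e / (2 * (L + 1)))"
  show "\<exists>d>0. \<forall>n x y. nonoverlapping_intervals a b n x y \<and> (\<Sum>k<n. y k - x k) < d \<longrightarrow>
      (\<Sum>k<n. \<bar>g (y k) - g (x k)\<bar>) < e"
  proof (intro exI[of _ d] conjI allI impI)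
    show "d > 0" using d1 e \<open>L \<ge> 0\<close> by (simp add: d_def)
    fix n x y assume xy: "nonoverlapping_intervals a b n x y \<and> (\<Sum>k<n. y k - x k) < d"
    then have Sf: "(\<Sum>k<n. \<bar>f (y k) - f (x k)\<bar>) \<le> e / (2 * (M + 1))"
      and Sl: "(\<Sum>k<n. y k - x k) \<le> e / (2 * (L + 1))"
      using small[of n x y] by (auto simp: d_def)
    have "(\<Sum>k<n. \<bar>g (y k) - g (x k)\<bar>) \<le> (\<Sum>k<n. M * \<bar>f (y k) - f (x k)\<bar> + L * (y k - x k))"
      using xy by (intro sum_mono dom) (auto simp: nonoverlapping_intervals_def)
    also have "\<dots> = M * (\<Sum>k<n. \<bar>f (y k) - f (x k)\<bar>) + L * (\<Sum>k<n. y k - x k)"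
      by (simp add: sum.distrib sum_distrib_left)
    also have "\<dots> \<le> M * (e / (2 * (M + 1))) + L * (e / (2 * (L + 1)))"
      using Sf Sl \<open>M \<ge> 0\<close> \<open>L \<ge> 0\<close> by (intro add_mono mult_left_mono) auto
    also have "\<dots> < e / 2 + e / 2"
      using \<open>M \<ge> 0\<close> \<open>L \<ge> 0\<close> e by (intro add_strict_mono) (simp_all add: field_simps)
    finally show "(\<Sum>k<n. \<bar>g (y k) - g (x k)\<bar>) < e" by simp
  qed
qed

lemma abs_continuous_on_mult_linear:
  assumes ac: "abs_continuous_on p q f"
  shows "abs_continuous_on p q (\<lambda>t. (t - c) * f t)"
proof -
  have "bounded (f ` {p..q})"
    by (intro compact_imp_bounded compact_continuous_image abs_continuous_on_imp_continuous_on ac) simp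
  then obtain B0 where "\<And>t. t \<in> {p..q} \<Longrightarrow> \<bar>f t\<bar> \<le> B0"
    unfolding bounded_real by blast
  then obtain B where B: "B \<ge> 0" "\<And>t. t \<in> {p..q} \<Longrightarrow> \<bar>f t\<bar> \<le> B"
    by (metis abs_ge_zero abs_ge_self order_trans)
  define M where "M = \<bar>p - c\<bar> + \<bar>q - c\<bar>"
  show ?thesis
  proof (rule abs_continuous_on_dominated[OF ac _ B(1)])
    show "M \<ge> 0" by (simp add: M_def)
    fix x y assume xy: "p \<le> x" "x \<le> y" "y \<le> q"
    have "\<bar>(y - c) * f y - (x - c) * f x\<bar> = \<bar>(y - c) * (f y - f x) + (y - x) * f x\<bar>"
      by (simp add: algebra_simps)
    also have "\<dots> \<le> \<bar>y - c\<bar> * \<bar>f y - f x\<bar> + (y - x) * \<bar>f x\<bar>"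
      using xy abs_triangle_ineq[of "(y - c) * (f y - f x)" "(y - x) * f x"] by (simp add: abs_mult)
    also have "\<dots> \<le> M * \<bar>f y - f x\<bar> + (y - x) * B"
      using xy B(2)[of x] by (intro add_mono mult_right_mono mult_left_mono) (auto simp: M_def)
    finally show "\<bar>(y - c) * f y - (x - c) * f x\<bar> \<le> M * \<bar>f y - f x\<bar> + B * (y - x)"
      by (simp add: mult.commute)
  qed
qed

lemma tagged_division_of_Icc_memD:
  fixes p q :: real
  assumes "D tagged_division_of {p..q}" "(x, K) \<in> D"
  shows "K = {Inf K..Sup K}" "Inf K \<le> x" "x \<le> Sup K" "p \<le> Inf K" "Sup K \<le> q"
proof -
  obtain u v where K: "K = {u..v}"
    using tagged_division_ofD(4)[OF assms] unfolding box_real by blast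
  moreover have "x \<in> K" "K \<subseteq> {p..q}"
    using tagged_division_ofD(2,3)[OF assms] by auto
  ultimately have "u \<le> x" "x \<le> v" "p \<le> u" "v \<le> q" by auto
  then show "K = {Inf K..Sup K}" "Inf K \<le> x" "x \<le> Sup K" "p \<le> Inf K" "Sup K \<le> q"
    using K by auto
qed

lemma disjoint_open_intervals_real:
  fixes u1 v1 u2 v2 :: real
  assumes "{u1<..<v1} \<inter> {u2<..<v2} = {}" "u1 < v1" "u2 < v2"
  shows "v1 \<le> u2 \<or> v2 \<le> u1"
proof (rule ccontr)
  assume "\<not> (v1 \<le> u2 \<or> v2 \<le> u1)"
  then have "(max u1 u2 + min v1 v2) / 2 \<in> {u1<..<v1} \<inter> {u2<..<v2}"
    using assms(2,3) by (auto simp: max_def min_def)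
  then show False using assms(1) by blast
qed

lemma tagged_division_nonoverlapping_enumeration:
  fixes p q :: real
  assumes D: "D tagged_division_of {p..q}" and "T \<subseteq> D"
    and nondegenerate: "\<And>x K. (x, K) \<in> T \<Longrightarrow> content K \<noteq> 0"
  obtains n X Y where "nonoverlapping_intervals p q n X Y"
    "\<And>g :: real \<Rightarrow> real \<Rightarrow> real. (\<Sum>k<n. g (X k) (Y k)) = (\<Sum>(x, K)\<in>T. g (Inf K) (Sup K))"
proof -
  have "finite T" using \<open>T \<subseteq> D\<close> tagged_division_ofD(1)[OF D] by (rule finite_subset)
  then obtain h where h: "bij_betw h {..<card T} T"
    using ex_bij_betw_nat_finite lessThan_atLeast0 by metis
  define n where "n = card T"
  define X where "X k = Inf (snd (h k))" for k
  define Y where "Y k = Sup (snd (h k))" for k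
  have hD: "h k \<in> D" and interval: "snd (h k) = {X k..Y k}" "X k < Y k" "p \<le> X k" "Y k \<le> q"
    if "k < n" for k
  proof -
    have hT: "h k \<in> T" using h that unfolding n_def bij_betw_def by auto
    then show "h k \<in> D" using \<open>T \<subseteq> D\<close> by auto
    note K = tagged_division_of_Icc_memD[OF D, of "fst (h k)" "snd (h k)", simplified, OF \<open>h k \<in> D\<close>]
    show "snd (h k) = {X k..Y k}" "p \<le> X k" "Y k \<le> q"
      using K by (simp_all add: X_def Y_def)
    have "content (snd (h k)) \<noteq> 0"
      using nondegenerate[of "fst (h k)" "snd (h k)"] hT by simp
    then have "content {X k..Y k} \<noteq> 0"
      unfolding \<open>snd (h k) = {X k..Y k}\<close> .
    then show "X k < Y k"
      by (simp add: content_real_if split: if_splits)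
  qed
  have "\<forall>k<n. p \<le> X k \<and> X k \<le> Y k \<and> Y k \<le> q"
    using interval by fastforce
  moreover have "\<forall>i<n. \<forall>j<n. i \<noteq> j \<longrightarrow> Y i \<le> X j \<or> Y j \<le> X i"
  proof (intro allI impI)
    fix i j assume ij: "i < n" "j < n" "i \<noteq> j"
    then have "h i \<noteq> h j"
      using h unfolding bij_betw_def inj_on_def n_def by auto
    then have "interior (snd (h i)) \<inter> interior (snd (h j)) = {}"
      using tagged_division_ofD(5)[OF D, of "fst (h i)" "snd (h i)" "fst (h j)" "snd (h j)"] hD ij
      by (simp add: prod_eq_iff)
    then have "{X i<..<Y i} \<inter> {X j<..<Y j} = {}"
      using interval ij by simp
    then show "Y i \<le> X j \<or> Y j \<le> X i"
      using interval(2)[OF ij(1)] interval(2)[OF ij(2)] by (rule disjoint_open_intervals_real)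
  qed
  ultimately have "nonoverlapping_intervals p q n X Y"
    unfolding nonoverlapping_intervals_def by blast
  moreover have "(\<Sum>k<n. g (X k) (Y k)) = (\<Sum>(x, K)\<in>T. g (Inf K) (Sup K))" for g
    using sum.reindex_bij_betw[OF h, of "\<lambda>(x, K). g (Inf K) (Sup K)"]
    by (simp add: n_def X_def Y_def split_beta)
  ultimately show ?thesis by (rule that)
qed

lemma abs_continuous_on_tagged_division:
  fixes \<Phi> :: "real \<Rightarrow> real"
  assumes ac: "abs_continuous_on p q \<Phi>" and "e > 0"
  obtains \<delta> where "\<delta> > 0"
    "\<And>D T. D tagged_division_of {p..q} \<Longrightarrow> T \<subseteq> D \<Longrightarrow>
       (\<And>x K. (x, K) \<in> T \<Longrightarrow> content K \<noteq> 0) \<Longrightarrow> (\<Sum>(x, K)\<in>T. content K) < \<delta> \<Longrightarrow>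
       (\<Sum>(x, K)\<in>T. \<bar>\<Phi> (Sup K) - \<Phi> (Inf K)\<bar>) < e"
proof -
  obtain \<delta> where "\<delta> > 0" and small: "\<And>n x y. nonoverlapping_intervals p q n x y \<Longrightarrow>
      (\<Sum>k<n. y k - x k) < \<delta> \<Longrightarrow> (\<Sum>k<n. \<bar>\<Phi> (y k) - \<Phi> (x k)\<bar>) < e"
    by (fact abs_continuous_onE[OF ac \<open>e > 0\<close>])
  show ?thesis
  proof (rule that[OF \<open>\<delta> > 0\<close>])
    fix D T
    assume D: "D tagged_division_of {p..q}" and "T \<subseteq> D"
      and nondegenerate: "\<And>x K. (x, K) \<in> T \<Longrightarrow> content K \<noteq> 0"
      and "(\<Sum>(x, K)\<in>T. content K) < \<delta>"
    obtain n X Y where ok: "nonoverlapping_intervals p q n X Y"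
      and sums: "\<And>g :: real \<Rightarrow> real \<Rightarrow> real. (\<Sum>k<n. g (X k) (Y k)) = (\<Sum>(x, K)\<in>T. g (Inf K) (Sup K))"
      by (rule tagged_division_nonoverlapping_enumeration[OF D \<open>T \<subseteq> D\<close>]) (use nondegenerate in auto)
    have "(\<Sum>(x, K)\<in>T. content K) = (\<Sum>(x, K)\<in>T. Sup K - Inf K)"
    proof (rule sum.cong)
      fix z assume "z \<in> T"
      then have "snd z = {Inf (snd z)..Sup (snd z)}" "Inf (snd z) \<le> Sup (snd z)"
        using tagged_division_of_Icc_memD[OF D, of "fst z" "snd z"] \<open>T \<subseteq> D\<close> by force+
      then show "(\<lambda>(x, K). content K) z = (\<lambda>(x, K). Sup K - Inf K) z"
        by (metis content_real split_beta)
    qed simp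
    then have "(\<Sum>k<n. Y k - X k) < \<delta>"
      using sums[of "\<lambda>u v. v - u"] \<open>(\<Sum>(x, K)\<in>T. content K) < \<delta>\<close> by simp
    then show "(\<Sum>(x, K)\<in>T. \<bar>\<Phi> (Sup K) - \<Phi> (Inf K)\<bar>) < e"
      using small[OF ok] sums[of "\<lambda>u v. \<bar>\<Phi> v - \<Phi> u\<bar>"] by simp
  qed
qed

lemma has_real_derivative_within_radius:
  fixes \<Phi> \<phi> :: "real \<Rightarrow> real"
  assumes der: "\<And>t. t \<in> S \<Longrightarrow> (\<Phi> has_real_derivative \<phi> t) (at t within U)" and "\<epsilon> > 0"
  obtains r where "\<And>t. r t > 0"
    "\<And>t y. t \<in> S \<Longrightarrow> y \<in> U \<Longrightarrow> \<bar>y - t\<bar> < r t \<Longrightarrow>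
       \<bar>\<Phi> y - \<Phi> t - (y - t) * \<phi> t\<bar> \<le> \<epsilon> * \<bar>y - t\<bar>"
proof -
  have "\<exists>r>0. t \<in> S \<longrightarrow> (\<forall>y\<in>U. \<bar>y - t\<bar> < r \<longrightarrow> \<bar>\<Phi> y - \<Phi> t - (y - t) * \<phi> t\<bar> \<le> \<epsilon> * \<bar>y - t\<bar>)"
    for t
  proof (cases "t \<in> S")
    case True
    then have "(\<Phi> has_derivative (*) (\<phi> t)) (at t within U)"
      using der by (simp add: has_field_derivative_def)
    then obtain r where "r > 0" "\<forall>y\<in>U. norm (y - t) < r \<longrightarrow>
        norm (\<Phi> y - \<Phi> t - \<phi> t * (y - t)) \<le> \<epsilon> * norm (y - t)"
      unfolding has_derivative_within_alt using \<open>\<epsilon> > 0\<close> by blast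
    then show ?thesis by (auto simp: mult.commute)
  qed (auto intro: exI[of _ 1])
  then obtain r where "\<And>t. r t > 0" and "\<And>t y. t \<in> S \<Longrightarrow> y \<in> U \<Longrightarrow> \<bar>y - t\<bar> < r t \<Longrightarrow>
      \<bar>\<Phi> y - \<Phi> t - (y - t) * \<phi> t\<bar> \<le> \<epsilon> * \<bar>y - t\<bar>"
    by metis
  then show ?thesis by (rule that)
qed

lemma straddle_estimate:
  fixes \<Phi> :: "real \<Rightarrow> real"
  assumes "u \<le> t" "t \<le> v"
    and u: "\<bar>\<Phi> u - \<Phi> t - (u - t) * c\<bar> \<le> \<epsilon> * \<bar>u - t\<bar>"
    and v: "\<bar>\<Phi> v - \<Phi> t - (v - t) * c\<bar> \<le> \<epsilon> * \<bar>v - t\<bar>"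
  shows "\<bar>(v - u) * c - (\<Phi> v - \<Phi> u)\<bar> \<le> \<epsilon> * (v - u)"
proof -
  have "\<bar>(v - u) * c - (\<Phi> v - \<Phi> u)\<bar>
      = \<bar>(\<Phi> u - \<Phi> t - (u - t) * c) - (\<Phi> v - \<Phi> t - (v - t) * c)\<bar>"
    by (simp add: algebra_simps)
  also have "\<dots> \<le> \<epsilon> * \<bar>u - t\<bar> + \<epsilon> * \<bar>v - t\<bar>"
    using abs_triangle_ineq4 u v by (rule order_trans[OF _ add_mono])
  also have "\<dots> = \<epsilon> * (v - u)"
    using assms(1,2) by (simp add: algebra_simps)
  finally show ?thesis .
qed

lemma riemann_sum_derivative_estimate:
  fixes \<Phi> \<phi> :: "real \<Rightarrow> real"
  assumes D: "D tagged_division_of {p..q}" and "p \<le> q" and "\<epsilon> \<ge> 0"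
    and fine: "(\<lambda>t. ball t (r t)) fine D"
    and approx: "\<And>t y. t \<in> {p..q} - N \<Longrightarrow> y \<in> {p..q} \<Longrightarrow> \<bar>y - t\<bar> < r t \<Longrightarrow>
      \<bar>\<Phi> y - \<Phi> t - (y - t) * \<phi> t\<bar> \<le> \<epsilon> * \<bar>y - t\<bar>"
  defines "T \<equiv> {z \<in> D. fst z \<in> N \<and> content (snd z) \<noteq> 0}"
  shows "\<bar>(\<Sum>(x, K)\<in>D. content K * (if x \<in> N then 0 else \<phi> x)) - (\<Phi> q - \<Phi> p)\<bar>
    \<le> \<epsilon> * (q - p) + (\<Sum>(x, K)\<in>T. \<bar>\<Phi> (Sup K) - \<Phi> (Inf K)\<bar>)"
proof -
  have tag: "\<bar>content K * (if x \<in> N then 0 else \<phi> x) - (\<Phi> (Sup K) - \<Phi> (Inf K))\<bar>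
      \<le> \<epsilon> * content K + (if (x, K) \<in> T then \<bar>\<Phi> (Sup K) - \<Phi> (Inf K)\<bar> else 0)"
    if xK: "(x, K) \<in> D" for x K
  proof -
    note K = tagged_division_of_Icc_memD[OF D xK]
    have content: "content K = Sup K - Inf K"
      using content_real[of "Inf K" "Sup K"] K(2,3) by (simp only: K(1)[symmetric])
    show ?thesis
    proof (cases "x \<in> N")
      case False
      from K(2,3) have "Inf K \<in> {Inf K..Sup K}" "Sup K \<in> {Inf K..Sup K}" by auto
      then have "Inf K \<in> K" "Sup K \<in> K" by (simp_all only: K(1)[symmetric])
      then have "Inf K \<in> ball x (r x)" "Sup K \<in> ball x (r x)"
        using fineD[OF fine xK] by auto
      then have "\<bar>(Sup K - Inf K) * \<phi> x - (\<Phi> (Sup K) - \<Phi> (Inf K))\<bar> \<le> \<epsilon> * (Sup K - Inf K)"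
        using K False
        by (intro straddle_estimate[where t = x] approx) (auto simp: dist_real_def abs_minus_commute)
      then show ?thesis using False content by (simp add: T_def)
    next
      case True
      then show ?thesis
        using content K(2,3) xK \<open>\<epsilon> \<ge> 0\<close> by (auto simp: T_def abs_minus_commute)
    qed
  qed
  have "(\<Sum>(x, K)\<in>D. \<Phi> (Sup K) - \<Phi> (Inf K)) = \<Phi> q - \<Phi> p"
    by (rule additive_tagged_division_1[OF \<open>p \<le> q\<close> D])
  then have "\<bar>(\<Sum>(x, K)\<in>D. content K * (if x \<in> N then 0 else \<phi> x)) - (\<Phi> q - \<Phi> p)\<bar>
      = \<bar>\<Sum>(x, K)\<in>D. content K * (if x \<in> N then 0 else \<phi> x) - (\<Phi> (Sup K) - \<Phi> (Inf K))\<bar>"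
    by (simp add: sum_subtractf split_beta)
  also have "\<dots> \<le> (\<Sum>(x, K)\<in>D. \<epsilon> * content K
      + (if (x, K) \<in> T then \<bar>\<Phi> (Sup K) - \<Phi> (Inf K)\<bar> else 0))"
    by (rule order_trans[OF sum_abs sum_mono]) (use tag in auto)
  also have "\<dots> = \<epsilon> * (q - p) + (\<Sum>(x, K)\<in>T. \<bar>\<Phi> (Sup K) - \<Phi> (Inf K)\<bar>)"
    using additive_content_tagged_division[of D p q] D tagged_division_ofD(1)[OF D] \<open>p \<le> q\<close>
    by (simp add: sum.distrib sum_distrib_left[symmetric] sum.If_cases split_beta T_def Int_def box_real)
  finally show ?thesis .
qed

theorem fundamental_theorem_of_calculus_abs_continuous:
  fixes \<Phi> \<phi> :: "real \<Rightarrow> real"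
  assumes "p \<le> q" and ac: "abs_continuous_on p q \<Phi>" and N: "negligible N"
    and der: "\<And>t. t \<in> {p..q} - N \<Longrightarrow> (\<Phi> has_real_derivative \<phi> t) (at t within {p..q})"
  shows "(\<phi> has_integral (\<Phi> q - \<Phi> p)) {p..q}"
proof -
  define \<psi> where "\<psi> t = (if t \<in> N then 0 else \<phi> t)" for t
  have "(\<psi> has_integral (\<Phi> q - \<Phi> p)) {p..q}"
    unfolding has_integral_real
  proof (intro allI impI)
    fix e :: real assume "e > 0"
    \<comment> \<open>Tags outside \<open>N\<close> are handled by the derivative; tags in \<open>N\<close>, where \<open>\<psi>\<close> vanishes, by
      absolute continuity, as negligibility of \<open>N\<close> makes their intervals short in total.\<close>
    obtain \<delta> where "\<delta> > 0" and small: "\<And>D T. D tagged_division_of {p..q} \<Longrightarrow> T \<subseteq> D \<Longrightarrow>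
        (\<And>x K. (x, K) \<in> T \<Longrightarrow> content K \<noteq> 0) \<Longrightarrow> (\<Sum>(x, K)\<in>T. content K) < \<delta> \<Longrightarrow>
        (\<Sum>(x, K)\<in>T. \<bar>\<Phi> (Sup K) - \<Phi> (Inf K)\<bar>) < e / 2"
      by (rule abs_continuous_on_tagged_division[OF ac, of "e / 2"]) (use \<open>e > 0\<close> in auto)
    have "(indicator N has_integral (0::real)) {p..q}"
      using N unfolding negligible_def by (metis box_real(2))
    then obtain \<gamma>0 where "gauge \<gamma>0" and \<gamma>0: "\<And>D. D tagged_division_of {p..q} \<Longrightarrow> \<gamma>0 fine D \<Longrightarrow>
        (\<Sum>(x, K)\<in>D. content K * indicator N x) < \<delta>"
      unfolding has_integral_real using \<open>\<delta> > 0\<close> by (force simp: split_beta)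
    define \<epsilon> where "\<epsilon> = e / (2 * (q - p + 1))"
    have "\<epsilon> > 0" using \<open>e > 0\<close> \<open>p \<le> q\<close> by (simp add: \<epsilon>_def)
    then obtain r where "\<And>t. r t > 0" and r: "\<And>t y. t \<in> {p..q} - N \<Longrightarrow> y \<in> {p..q} \<Longrightarrow>
        \<bar>y - t\<bar> < r t \<Longrightarrow> \<bar>\<Phi> y - \<Phi> t - (y - t) * \<phi> t\<bar> \<le> \<epsilon> * \<bar>y - t\<bar>"
      using has_real_derivative_within_radius[OF der] by metis
    define \<gamma> where "\<gamma> t = \<gamma>0 t \<inter> ball t (r t)" for t
    have "gauge \<gamma>"
      unfolding \<gamma>_def using \<open>gauge \<gamma>0\<close> gauge_ball_dependent \<open>\<And>t. r t > 0\<close> by (intro gauge_Int) auto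
    moreover have "\<bar>(\<Sum>(x, K)\<in>D. content K * \<psi> x) - (\<Phi> q - \<Phi> p)\<bar> < e"
      if D: "D tagged_division_of {p..q}" and "\<gamma> fine D" for D
    proof -
      define T where "T = {z \<in> D. fst z \<in> N \<and> content (snd z) \<noteq> 0}"
      have "\<gamma>0 fine D" and "(\<lambda>t. ball t (r t)) fine D"
        using \<open>\<gamma> fine D\<close> unfolding \<gamma>_def fine_Int by auto
      have "(\<Sum>(x, K)\<in>T. content K) = (\<Sum>(x, K)\<in>T. content K * indicator N x)"
        by (rule sum.cong) (auto simp: T_def)
      also have "\<dots> \<le> (\<Sum>(x, K)\<in>D. content K * indicator N x)"
        using tagged_division_ofD(1)[OF D] by (intro sum_mono2) (auto simp: T_def)
      also have "\<dots> < \<delta>" using \<gamma>0[OF D \<open>\<gamma>0 fine D\<close>] .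
      finally have "(\<Sum>(x, K)\<in>T. \<bar>\<Phi> (Sup K) - \<Phi> (Inf K)\<bar>) < e / 2"
        by (intro small[OF D]) (auto simp: T_def)
      moreover have "\<epsilon> * (q - p) \<le> e / 2"
        using \<open>e > 0\<close> \<open>p \<le> q\<close> by (simp add: \<epsilon>_def field_simps)
      moreover have "\<bar>(\<Sum>(x, K)\<in>D. content K * \<psi> x) - (\<Phi> q - \<Phi> p)\<bar>
          \<le> \<epsilon> * (q - p) + (\<Sum>(x, K)\<in>T. \<bar>\<Phi> (Sup K) - \<Phi> (Inf K)\<bar>)"
        unfolding \<psi>_def T_def
        by (rule riemann_sum_derivative_estimate[OF D \<open>p \<le> q\<close> _ \<open>(\<lambda>t. ball t (r t)) fine D\<close> r])
          (use \<open>\<epsilon> > 0\<close> in auto)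
      ultimately show ?thesis by linarith
    qed
    ultimately show "\<exists>\<gamma>. gauge \<gamma> \<and> (\<forall>D. D tagged_division_of {p..q} \<and> \<gamma> fine D \<longrightarrow>
        norm ((\<Sum>(x, K)\<in>D. content K *\<^sub>R \<psi> x) - (\<Phi> q - \<Phi> p)) < e)"
      by auto
  qed
  then show ?thesis
    by (rule has_integral_spike[OF N, rotated]) (simp add: \<psi>_def)
qed

lemma abs_continuous_on_integration_by_parts_linear:
  fixes f f' :: "real \<Rightarrow> real"
  assumes "p \<le> q" and ac: "abs_continuous_on p q f" and N: "negligible N"
    and der: "\<And>t. t \<in> {p..q} - N \<Longrightarrow> (f has_real_derivative f' t) (at t within {p..q})"
  shows "((\<lambda>t. (t - c) * f' t) has_integral ((q - c) * f q - (p - c) * f p - integral {p..q} f)) {p..q}"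
proof -
  have "((\<lambda>t. (t - c) * f t) has_real_derivative f t + (t - c) * f' t) (at t within {p..q})"
    if "t \<in> {p..q} - N" for t
    using der[OF that] by (auto intro!: derivative_eq_intros)
  then have "((\<lambda>t. f t + (t - c) * f' t) has_integral ((q - c) * f q - (p - c) * f p)) {p..q}"
    by (rule fundamental_theorem_of_calculus_abs_continuous[OF \<open>p \<le> q\<close>
          abs_continuous_on_mult_linear[OF ac] N])
  moreover have "(f has_integral integral {p..q} f) {p..q}"
    by (intro integrable_integral integrable_continuous_interval abs_continuous_on_imp_continuous_on ac)
  ultimately have "((\<lambda>t. (f t + (t - c) * f' t) - f t) has_integral
      ((q - c) * f q - (p - c) * f p - integral {p..q} f)) {p..q}"
    by (rule has_integral_diff)
  then show ?thesis by simp
qed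

lemma AC_L2_setting_derivative_ae:
  assumes "AC_L2_setting a b f f'"
  obtains N where "negligible N"
    "\<And>t. t \<in> {a..b} - N \<Longrightarrow> (f has_real_derivative f' t) (at t within {a..b})"
proof -
  have "AE t in lebesgue_on {a..b}. (f has_real_derivative f' t) (at t within {a..b})"
    using assms by (simp add: AC_L2_setting_def)
  then have "AE t in lebesgue. t \<in> {a..b} \<longrightarrow> (f has_real_derivative f' t) (at t within {a..b})"
    by (subst (asm) AE_restrict_space_iff) auto
  then obtain N where N: "{t \<in> space lebesgue.
      \<not> (t \<in> {a..b} \<longrightarrow> (f has_real_derivative f' t) (at t within {a..b}))} \<subseteq> N"
    "emeasure lebesgue N = 0" "N \<in> sets lebesgue"
    by (erule AE_E)
  show ?thesis
  proof (rule that)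
    show "negligible N" using N(2,3) by (simp add: negligible_iff_emeasure0)
    show "(f has_real_derivative f' t) (at t within {a..b})" if "t \<in> {a..b} - N" for t
      using N(1) that by auto
  qed
qed

lemma has_integral_linear_shift:
  fixes p q c :: real
  assumes "p \<le> q"
  shows "((\<lambda>t. t - c) has_integral ((q - c)\<^sup>2 / 2 - (p - c)\<^sup>2 / 2)) {p..q}"
proof -
  have "((\<lambda>t. (t - c)\<^sup>2 / 2) has_vector_derivative (t - c)) (at t within {p..q})" for t
    unfolding has_real_derivative_iff_has_vector_derivative[symmetric]
    by (auto intro!: derivative_eq_intros)
  then show ?thesis
    using fundamental_theorem_of_calculus[OF assms, of "\<lambda>t. (t - c)\<^sup>2 / 2"] by simp
qed

lemma has_integral_square_shift:
  fixes p q c :: real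
  assumes "p \<le> q"
  shows "((\<lambda>t. (t - c)\<^sup>2) has_integral ((q - c) ^ 3 / 3 - (p - c) ^ 3 / 3)) {p..q}"
proof -
  have "((\<lambda>t. (t - c) ^ 3 / 3) has_vector_derivative (t - c)\<^sup>2) (at t within {p..q})" for t
    unfolding has_real_derivative_iff_has_vector_derivative[symmetric]
    by (auto intro!: derivative_eq_intros)
  then show ?thesis
    using fundamental_theorem_of_calculus[OF assms, of "\<lambda>t. (t - c) ^ 3 / 3"] by simp
qed

lemma has_integral_three_pieces:
  fixes F :: "real \<Rightarrow> real \<Rightarrow> real"
  assumes le: "a \<le> x" "x \<le> y" "y \<le> b"
    and I1: "(F a has_integral I1) {a..x}" and I2: "(F m has_integral I2) {x..y}"
    and I3: "(F b has_integral I3) {y..b}"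
  shows "((\<lambda>t. F (if t \<le> x then a else if t \<le> y then m else b) t) has_integral (I1 + I2 + I3)) {a..b}"
proof -
  let ?G = "\<lambda>t. F (if t \<le> x then a else if t \<le> y then m else b) t"
  have 1: "(?G has_integral I1) {a..x}"
    by (rule has_integral_spike[OF negligible_empty _ I1]) auto
  have 2: "(?G has_integral I2) {x..y}"
    by (rule has_integral_spike[OF negligible_sing[of x] _ I2]) (use le in auto)
  have 3: "(?G has_integral I3) {y..b}"
    by (rule has_integral_spike[OF negligible_sing[of y] _ I3]) (use le in auto)
  have "(?G has_integral (I1 + I2)) {a..y}"
    by (rule has_integral_combine[OF le(1,2) 1 2])
  then show ?thesis
    using has_integral_combine[OF _ le(3) _ 3] le by simp
qed

definition trapezoid_kernel :: "real \<Rightarrow> real \<Rightarrow> real \<Rightarrow> real \<Rightarrow> real" where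
  "trapezoid_kernel a b x t = t - (if t \<le> x then a else if t \<le> a + b - x then (a + b) / 2 else b)"

context
  fixes a b x :: real
  assumes x_range: "a \<le> x" "x \<le> (a + b) / 2"
begin

private lemma pieces_ordered: "a \<le> x" "x \<le> a + b - x" "a + b - x \<le> b"
  using x_range by auto

lemma has_integral_trapezoid_kernel: "(trapezoid_kernel a b x has_integral 0) {a..b}"
proof -
  have "(trapezoid_kernel a b x has_integral
      ((x - a)\<^sup>2 / 2 - (a - a)\<^sup>2 / 2) + ((a + b - x - (a + b) / 2)\<^sup>2 / 2 - (x - (a + b) / 2)\<^sup>2 / 2)
        + ((b - b)\<^sup>2 / 2 - (a + b - x - b)\<^sup>2 / 2)) {a..b}"
    using has_integral_three_pieces[where F = "\<lambda>c t. t - c", OF pieces_ordered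
        has_integral_linear_shift has_integral_linear_shift has_integral_linear_shift] pieces_ordered
    by (simp add: trapezoid_kernel_def[abs_def])
  moreover have "((x - a)\<^sup>2 / 2 - (a - a)\<^sup>2 / 2) + ((a + b - x - (a + b) / 2)\<^sup>2 / 2 - (x - (a + b) / 2)\<^sup>2 / 2)
      + ((b - b)\<^sup>2 / 2 - (a + b - x - b)\<^sup>2 / 2) = 0"
    by (simp add: power2_eq_square field_simps)
  ultimately show ?thesis by (simp only:)
qed

lemma has_integral_trapezoid_kernel_square:
  "((\<lambda>t. (trapezoid_kernel a b x t)\<^sup>2) has_integral
     (b - a) * ((b - a)\<^sup>2 / 48 + (x - (3 * a + b) / 4)\<^sup>2)) {a..b}"
proof -
  have "((\<lambda>t. (trapezoid_kernel a b x t)\<^sup>2) has_integral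
      ((x - a) ^ 3 / 3 - (a - a) ^ 3 / 3) + ((a + b - x - (a + b) / 2) ^ 3 / 3 - (x - (a + b) / 2) ^ 3 / 3)
        + ((b - b) ^ 3 / 3 - (a + b - x - b) ^ 3 / 3)) {a..b}"
    using has_integral_three_pieces[where F = "\<lambda>c t. (t - c)\<^sup>2", OF pieces_ordered
        has_integral_square_shift has_integral_square_shift has_integral_square_shift] pieces_ordered
    by (simp add: trapezoid_kernel_def)
  moreover have "((x - a) ^ 3 / 3 - (a - a) ^ 3 / 3) + ((a + b - x - (a + b) / 2) ^ 3 / 3 - (x - (a + b) / 2) ^ 3 / 3)
      + ((b - b) ^ 3 / 3 - (a + b - x - b) ^ 3 / 3) = (b - a) * ((b - a)\<^sup>2 / 48 + (x - (3 * a + b) / 4)\<^sup>2)"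
    by (simp add: power2_eq_square power3_eq_cube field_simps)
  ultimately show ?thesis by (simp only:)
qed

lemma has_integral_trapezoid_kernel_mult_derivative:
  fixes f f' :: "real \<Rightarrow> real"
  assumes ac: "abs_continuous_on a b f" and N: "negligible N"
    and der: "\<And>t. t \<in> {a..b} - N \<Longrightarrow> (f has_real_derivative f' t) (at t within {a..b})"
  shows "((\<lambda>t. trapezoid_kernel a b x t * f' t) has_integral
     (b - a) / 2 * (f x + f (a + b - x)) - integral {a..b} f) {a..b}"
proof -
  have parts: "((\<lambda>t. (t - c) * f' t) has_integral ((q - c) * f q - (p - c) * f p - integral {p..q} f)) {p..q}"
    if "a \<le> p" "p \<le> q" "q \<le> b" for p q c
  proof (rule abs_continuous_on_integration_by_parts_linear[OF \<open>p \<le> q\<close> _ N])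
    show "abs_continuous_on p q f" using abs_continuous_on_subinterval[OF ac] that by simp
    show "(f has_real_derivative f' t) (at t within {p..q})" if "t \<in> {p..q} - N" for t
      using der[of t] that \<open>a \<le> p\<close> \<open>q \<le> b\<close> by (auto intro: DERIV_subset)
  qed
  have "f integrable_on {a..b}"
    by (intro integrable_continuous_interval abs_continuous_on_imp_continuous_on ac)
  then have pieces: "integral {a..x} f + integral {x..a + b - x} f + integral {a + b - x..b} f
      = integral {a..b} f"
    using pieces_ordered
    by (simp add: Henstock_Kurzweil_Integration.integral_combine integrable_subinterval_real)
  have "((\<lambda>t. trapezoid_kernel a b x t * f' t)
      has_integral ((x - a) * f x - (a - a) * f a - integral {a..x} f)
        + ((a + b - x - (a + b) / 2) * f (a + b - x) - (x - (a + b) / 2) * f x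
           - integral {x..a + b - x} f)
        + ((b - b) * f b - (a + b - x - b) * f (a + b - x) - integral {a + b - x..b} f)) {a..b}"
    using has_integral_three_pieces[where F = "\<lambda>c t. (t - c) * f' t", OF pieces_ordered
        parts parts parts] pieces_ordered by (simp add: trapezoid_kernel_def)
  moreover have "((x - a) * f x - (a - a) * f a - integral {a..x} f)
        + ((a + b - x - (a + b) / 2) * f (a + b - x) - (x - (a + b) / 2) * f x
           - integral {x..a + b - x} f)
        + ((b - b) * f b - (a + b - x - b) * f (a + b - x) - integral {a + b - x..b} f)
      = (b - a) / 2 * (f x + f (a + b - x)) - integral {a..b} f"
    unfolding pieces[symmetric] by (simp add: field_simps)
  ultimately show ?thesis by (simp only:)
qed

end

lemma has_integral_cauchy_schwarz_centered:
  fixes K g :: "real \<Rightarrow> real"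
  assumes "(K has_integral 0) S" and "((\<lambda>t. (K t)\<^sup>2) has_integral P) S" and "P > 0"
    and "(g has_integral D) S" and "((\<lambda>t. (g t)\<^sup>2) has_integral G) S"
    and "((\<lambda>t. K t * g t) has_integral A) S"
    and "((\<lambda>t. 1) has_integral h) S" and "h > 0"
  shows "A\<^sup>2 \<le> P * (G - D\<^sup>2 / h)"
proof -
  define c where "c = D / h"
  have expand: "(\<lambda>t. (P * (g t - c) - A * K t)\<^sup>2) = (\<lambda>t. P\<^sup>2 * (g t)\<^sup>2 + (-2 * P\<^sup>2 * c) * g t
      + (P\<^sup>2 * c\<^sup>2) * 1 + (-2 * P * A) * (K t * g t) + (2 * P * A * c) * K t + A\<^sup>2 * (K t)\<^sup>2)"
    by (simp add: fun_eq_iff power2_eq_square algebra_simps)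
  have "((\<lambda>t. (P * (g t - c) - A * K t)\<^sup>2) has_integral
      (P\<^sup>2 * G + (-2 * P\<^sup>2 * c) * D + (P\<^sup>2 * c\<^sup>2) * h + (-2 * P * A) * A + (2 * P * A * c) * 0 + A\<^sup>2 * P)) S"
    unfolding expand using assms by (intro has_integral_add has_integral_mult_right)
  then have "0 \<le> P\<^sup>2 * G + (-2 * P\<^sup>2 * c) * D + (P\<^sup>2 * c\<^sup>2) * h + (-2 * P * A) * A
      + (2 * P * A * c) * 0 + A\<^sup>2 * P"
    by (rule has_integral_nonneg) simp
  also have "\<dots> = P * (P * (G - D\<^sup>2 / h) - A\<^sup>2)"
    unfolding c_def using \<open>h > 0\<close> by (simp add: power2_eq_square field_simps)
  finally show ?thesis
    using \<open>P > 0\<close> by (simp add: zero_le_mult_iff)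
qed

lemma trap_bound_eq:
  assumes "a < b"
  shows "trap_bound C a b f f' x =
    sqrt ((b - a) * (C * (b - a)\<^sup>2 + (x - (3 * a + b) / 4)\<^sup>2) * sigma a b f f') / (b - a)"
proof -
  have "(b - a) powr (-1/2) = sqrt (b - a) / (b - a)"
    using assms by (simp add: powr_minus_divide powr_half_sqrt field_simps real_div_sqrt)
  then show ?thesis
    unfolding trap_bound_def by (simp add: real_sqrt_mult)
qed

lemma trap_lhs_eq:
  assumes "a < b"
  shows "trap_lhs a b f x =
    \<bar>(b - a) / 2 * (f x + f (a + b - x)) - (LINT t|lebesgue_on {a..b}. f t)\<bar> / (b - a)"
proof -
  have "(f x + f (a + b - x)) / 2 - 1 / (b - a) * (LINT t|lebesgue_on {a..b}. f t)
      = ((b - a) / 2 * (f x + f (a + b - x)) - (LINT t|lebesgue_on {a..b}. f t)) / (b - a)"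
    using assms by (simp add: field_simps)
  then show ?thesis
    unfolding trap_lhs_def using assms by simp
qed

lemma trapezoid_inequality:
  assumes S: "AC_L2_setting a b f f'" and x: "x \<in> {a..(a + b) / 2}"
  shows "trap_lhs a b f x \<le> trap_bound (1/48) a b f f' x"
proof -
  have "a < b" and ac: "abs_continuous_on a b f"
    and sq: "integrable (lebesgue_on {a..b}) (\<lambda>t. (f' t)\<^sup>2)"
    using S by (simp_all add: AC_L2_setting_def)
  obtain N where N: "negligible N"
    and der: "\<And>t. t \<in> {a..b} - N \<Longrightarrow> (f has_real_derivative f' t) (at t within {a..b})"
    using AC_L2_setting_derivative_ae[OF S] by blast
  define A where "A = (b - a) / 2 * (f x + f (a + b - x)) - integral {a..b} f"
  define P where "P = (b - a) * ((b - a)\<^sup>2 / 48 + (x - (3 * a + b) / 4)\<^sup>2)"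
  have "P > 0" using \<open>a < b\<close> by (simp add: P_def add_pos_nonneg)
  have key: "A\<^sup>2 \<le> P * sigma a b f f'"
    unfolding sigma_def
  proof (rule has_integral_cauchy_schwarz_centered)
    show "(trapezoid_kernel a b x has_integral 0) {a..b}"
      using has_integral_trapezoid_kernel x by simp
    show "((\<lambda>t. (trapezoid_kernel a b x t)\<^sup>2) has_integral P) {a..b}"
      using has_integral_trapezoid_kernel_square x unfolding P_def by simp
    show "(f' has_integral f b - f a) {a..b}"
      using fundamental_theorem_of_calculus_abs_continuous \<open>a < b\<close> ac N der by simp
    show "((\<lambda>t. (f' t)\<^sup>2) has_integral (LINT t|lebesgue_on {a..b}. (f' t)\<^sup>2)) {a..b}"
      by (rule has_integral_integral_lebesgue_on[OF sq]) simp
    show "((\<lambda>t. trapezoid_kernel a b x t * f' t) has_integral A) {a..b}"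
      using has_integral_trapezoid_kernel_mult_derivative[OF _ _ ac N der] x unfolding A_def by simp
    show "((\<lambda>t. 1) has_integral b - a) {a..b}"
      using has_integral_const_real[of "1::real" a b] \<open>a < b\<close> by simp
  qed (use \<open>P > 0\<close> \<open>a < b\<close> in auto)
  have LINT: "(LINT t|lebesgue_on {a..b}. f t) = integral {a..b} f"
    by (intro lebesgue_integral_eq_integral continuous_imp_integrable_real
        abs_continuous_on_imp_continuous_on ac) simp
  have "\<bar>A\<bar> / (b - a) \<le> sqrt (P * sigma a b f f') / (b - a)"
    using real_sqrt_le_mono[OF key] \<open>a < b\<close> by (simp add: divide_right_mono)
  then show ?thesis
    unfolding trap_lhs_eq[OF \<open>a < b\<close>] trap_bound_eq[OF \<open>a < b\<close>] LINT A_def P_def by simp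
qed

lemma AC_L2_setting_parabola: "AC_L2_setting 0 1 (\<lambda>t. (t - 1/2)\<^sup>2 / 2) (\<lambda>t. t - 1/2)"
proof -
  have "abs_continuous_on 0 1 (\<lambda>t. (t - 1/2)\<^sup>2 / 2)"
  proof (rule abs_continuous_on_dominated[OF abs_continuous_on_const order_refl])
    fix x y :: real assume "0 \<le> x" "x \<le> y" "y \<le> 1"
    have "(y - 1/2)\<^sup>2 / 2 - (x - 1/2)\<^sup>2 / 2 = (y - x) * (x + y - 1) / 2"
      by (simp add: power2_eq_square field_simps)
    then have "\<bar>(y - 1/2)\<^sup>2 / 2 - (x - 1/2)\<^sup>2 / 2\<bar> = (y - x) * \<bar>x + y - 1\<bar> / 2"
      using \<open>x \<le> y\<close> by (simp only: abs_divide abs_mult)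
    also have "\<dots> \<le> (y - x) * 1 / 2"
      using \<open>0 \<le> x\<close> \<open>x \<le> y\<close> \<open>y \<le> 1\<close> by (intro divide_right_mono mult_left_mono) auto
    finally show "\<bar>(y - 1/2)\<^sup>2 / 2 - (x - 1/2)\<^sup>2 / 2\<bar> \<le> 0 * \<bar>0 - 0\<bar> + 1/2 * (y - x)"
      by simp
  qed simp
  moreover have "continuous_on {0..1} (\<lambda>t::real. t - 1/2)"
    by (intro continuous_intros)
  then have "integrable (lebesgue_on {0..1}) (\<lambda>t::real. t - 1/2)"
    and "integrable (lebesgue_on {0..1}) (\<lambda>t::real. (t - 1/2)\<^sup>2)"
    by (auto intro!: continuous_imp_integrable_real continuous_intros)
  ultimately show ?thesis
    unfolding AC_L2_setting_def
    by (auto intro!: AE_I2 derivative_eq_intros borel_measurable_integrable)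
qed

lemma parabola_trap_lhs: "trap_lhs 0 1 (\<lambda>t. (t - 1/2)\<^sup>2 / 2) 0 = 1/12"
proof -
  have "((\<lambda>t. (t - 1/2)\<^sup>2 / 2) has_integral 1/24) {0..1::real}"
    using has_integral_mult_left[OF has_integral_square_shift[of 0 1 "1/2"], of "1/2"]
    by (simp add: power3_eq_cube)
  moreover have "(LINT t|lebesgue_on {0..1}. (t - 1/2)\<^sup>2 / 2) = integral {0..1::real} (\<lambda>t. (t - 1/2)\<^sup>2 / 2)"
    by (intro lebesgue_integral_eq_integral continuous_imp_integrable_real continuous_intros) auto
  ultimately have "(LINT t|lebesgue_on {0..1}. (t - 1/2)\<^sup>2 / 2) = (1/24::real)"
    using integral_unique by metis
  then show ?thesis
    unfolding trap_lhs_def by (simp add: power2_eq_square)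
qed

lemma parabola_sigma: "sigma 0 1 (\<lambda>t. (t - 1/2)\<^sup>2 / 2) (\<lambda>t. t - 1/2) = 1/12"
proof -
  have "((\<lambda>t. (t - 1/2)\<^sup>2) has_integral 1/12) {0..1::real}"
    using has_integral_square_shift[of 0 1 "1/2"] by (simp add: power3_eq_cube)
  moreover have "(LINT t|lebesgue_on {0..1}. (t - 1/2)\<^sup>2) = integral {0..1::real} (\<lambda>t. (t - 1/2)\<^sup>2)"
    by (intro lebesgue_integral_eq_integral continuous_imp_integrable_real continuous_intros) simp
  ultimately have "(LINT t|lebesgue_on {0..1}. (t - 1/2)\<^sup>2) = (1/12::real)"
    using integral_unique by metis
  then show ?thesis
    unfolding sigma_def by simp
qed

lemma trapezoid_bound_sharp:
  assumes "C < 1/48"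
  shows "trap_bound C 0 1 (\<lambda>t. (t - 1/2)\<^sup>2 / 2) (\<lambda>t. t - 1/2) 0
    < trap_lhs 0 1 (\<lambda>t. (t - 1/2)\<^sup>2 / 2) 0"
proof -
  have "trap_bound C 0 1 (\<lambda>t. (t - 1/2)\<^sup>2 / 2) (\<lambda>t. t - 1/2) 0 = sqrt ((C + 1/16) / 12)"
    unfolding trap_bound_eq[OF zero_less_one] parabola_sigma by (simp add: power2_eq_square)
  also have "\<dots> < sqrt ((1/12)\<^sup>2)"
    using assms by (intro real_sqrt_less_mono) (simp add: power2_eq_square)
  also have "\<dots> = trap_lhs 0 1 (\<lambda>t. (t - 1/2)\<^sup>2 / 2) 0"
    unfolding parabola_trap_lhs by simp
  finally show ?thesis .
qed

theorem theorem2p3: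
  shows "(\<forall>a b f f' x. AC_L2_setting a b f f' \<and> x \<in> {a..(a+b)/2} \<longrightarrow>
            trap_lhs a b f x \<le> trap_bound (1/48) a b f f' x)
       \<and> (\<forall>C < 1/48. \<exists>a b f f' x. AC_L2_setting a b f f' \<and> x \<in> {a..(a+b)/2} \<and>
            trap_lhs a b f x > trap_bound C a b f f' x)"
proof (intro conjI allI impI)
  show "trap_lhs a b f x \<le> trap_bound (1/48) a b f f' x"
    if "AC_L2_setting a b f f' \<and> x \<in> {a..(a+b)/2}" for a b f f' x
    using trapezoid_inequality that by blast
  show "\<exists>a b f f' x. AC_L2_setting a b f f' \<and> x \<in> {a..(a+b)/2} \<and>
      trap_lhs a b f x > trap_bound C a b f f' x" if "C < 1/48" for C
    using AC_L2_setting_parabola trapezoid_bound_sharp[OF that] by force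
qed

end
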